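(* Let $d\ge 1$ be an integer, $\Omega\subset\mathbb{R}^d$ a measurable set, $0<\beta<1$, $\mathrm{Re}>0$, $\mathrm{Wi}>0$, $\theta=(1-\beta)/(\mathrm{Re}\,\mathrm{Wi})$, and let $\mathbf{s}:D(\mathbf{s})\to\mathbb{S}^d$ be a stress model with domain $D(\mathbf{s})\subset\mathbb{S}^d_+$. Let $c_0\ge 0$ be a constant and $h(\mathbf{C}):=-\mathrm{Wi}\cdot\operatorname{Tr}[\mathbf{s}(\mathbf{C})]+c_0$ for $\mathbf{C}\in D(\mathbf{s})$. Suppose there are measurable functions $\{f_i\}_{i=0}^\infty$ on $\sigma(D(\mathbf{s}))=\bigcup_{\mathbf{C}\in D(\mathbf{s})}\sigma(\mathbf{C})$ and nonnegative constants $\{c_{i,p}\}_{i,p=0}^\infty$ such that $$h(\mathbf{C})=\sum_{i=0}^\infty\sum_{p=0}^\infty c_{i,p}\big[\operatorname{Tr}\big(f_i(\mathbf{C})^2\big)\big]^p\quad\text{for every }\mathbf{C}\in D(\mathbf{s}).$$ Then the series $$\tilde k(\mathbf{C}_1,\mathbf{C}_2):=\sum_{i=0}^\infty\sum_{p=0}^\infty c_{i,p}\big[\operatorname{Tr}\big(f_i(\mathbf{C}_1)f_i(\mathbf{C}_2)\big)\big]^p$$ converges absolutely for every $\mathbf{C}_1,\mathbf{C}_2\in D(\mathbf{s})$, and the function $k:\mathcal{F}\times\mathcal{F}\to\mathbb{R}$ defined by $$k(\mathbf{q}_1,\mathbf{q}_2):=\frac12\int_\Omega\Big[\mathbf{u}_1(\mathbf{x})\cdot\mathbf{u}_2(\mathbf{x})+\theta\,\tilde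 k\big(\mathbf{c}_1(\mathbf{x}),\mathbf{c}_2(\mathbf{x})\big)\Big]\,d\mathbf{x}$$ (for $\mathbf{q}_j=(\mathbf{u}_j,\mathbf{c}_j)\in\mathcal{F}$) is a positive-definite kernel satisfying $\mathcal{E}(\mathbf{q})=k(\mathbf{q},\mathbf{q})$ for all $\mathbf{q}\in\mathcal{F}$. Moreover, if there is a coefficient $c_{i,p}>0$ with $p\ge1$ such that $f_i$ is injective on $\sigma(D(\mathbf{s}))$ and either $p$ is odd or $f_i$ is nonnegative, then the feature map of the reproducing kernel Hilbert space associated with $k$ is injective on $\mathcal{F}$.
   Context: $\mathbb{S}^d$ denotes the real symmetric $d\times d$ matrices and $\mathbb{S}^d_+$ the positive semidefinite ones. For $\mathbf{C}\in\mathbb{S}^d$ with spectrum $\sigma(\mathbf{C})$ and orthogonal eigenprojections $\mathbf{P}_{\mathbf{C}}(\lambda)$, and a function $f:\sigma(\mathbf{C})\to\mathbb{R}$, one defines $f(\mathbf{C}):=\sum_{\lambda\in\sigma(\mathbf{C})}f(\lambda)\mathbf{P}_{\mathbf{C}}(\lambda)$. The convention $[\,\cdot\,]^0=1$ is used. A state is a pair $\mathbf{q}=(\mathbf{u},\mathbf{c})$ of measurable fields $\mathbf{u}:\Omega\to\mathbb{R}^d$, $\mathbf{c}:\Omega\to D(\mathbf{s})$; its total mechanical energy is $\mathcal{E}(\mathbf{q})=\frac12\int_\Omega\big[|\mathbf{u}(\mathbf{x})|^2+\theta\,h(\mathbf{c}(\mathbf{x}))\big]d\mathbf{x}$ (equivalently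 $\frac12\int_\Omega[|\mathbf{u}|^2+\frac{1}{\mathrm{Re}}\operatorname{Tr}\boldsymbol{\tau}+\theta c_0]\,d\mathbf{x}$ with $\boldsymbol{\tau}=-(1-\beta)\mathbf{s}(\mathbf{c})$). $\mathcal{F}$ is the set of states with $\mathcal{E}(\mathbf{q})<\infty$, two states being identified when they agree almost everywhere on $\Omega$. A function $k:X\times X\to\mathbb{R}$ on a set $X$ is a positive-definite kernel if $\sum_{i,j=1}^m a_ia_jk(x_i,x_j)\ge0$ for all finite families $x_1,\dots,x_m\in X$, $a_1,\dots,a_m\in\mathbb{R}$; it then has a unique reproducing kernel Hilbert space $\mathcal{H}$ of functions on $X$, with feature map $\Phi(x)=k(\cdot,x)$ satisfying $\langle\Phi(x),\Phi(y)\rangle_{\mathcal{H}}=k(x,y)$. Injectivity of $\Phi$ means $k(x,x)-2k(x,y)+k(y,y)>0$ whenever $x\neq y$. *)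

theory Defs
  imports "HOL-Analysis.Analysis"
begin

definition sym_mat :: "real^'n^'n \<Rightarrow> bool" where
  "sym_mat C \<longleftrightarrow> transpose C = C"

definition psd_mat :: "real^'n^'n \<Rightarrow> bool" where
  "psd_mat C \<longleftrightarrow> sym_mat C \<and> (\<forall>v. 0 \<le> v \<bullet> (C *v v))"

definition mat_spectrum :: "real^'n^'n \<Rightarrow> real set" where
  "mat_spectrum C = {l. \<exists>v. v \<noteq> 0 \<and> C *v v = l *\<^sub>R v}"

definition eigenproj :: "real^'n^'n \<Rightarrow> real \<Rightarrow> real^'n^'n" where
  "eigenproj C l = (THE P. transpose P = P \<and> P ** P = P \<and>
       range (\<lambda>v. P *v v) = {v. C *v v = l *\<^sub>R v})"

definition matfun :: "(real \<Rightarrow> real) \<Rightarrow> real^'n^'n \<Rightarrow> real^'n^'n" where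
  "matfun f C = (\<Sum>l\<in>mat_spectrum C. f l *\<^sub>R eigenproj C l)"

definition spec_set :: "(real^'n^'n) set \<Rightarrow> real set" where
  "spec_set D = (\<Union>C\<in>D. mat_spectrum C)"

(* The term c_{i,p} [Tr(f_i(C1) f_i(C2))]^p of the series (convention [.]^0 = 1). *)
definition kterm :: "(nat \<Rightarrow> nat \<Rightarrow> real) \<Rightarrow> (nat \<Rightarrow> real \<Rightarrow> real)
     \<Rightarrow> real^'n^'n \<Rightarrow> real^'n^'n \<Rightarrow> nat \<Rightarrow> nat \<Rightarrow> real" where
  "kterm c f C1 C2 i p = c i p * (trace (matfun (f i) C1 ** matfun (f i) C2)) ^ p"

definition ktilde :: "(nat \<Rightarrow> nat \<Rightarrow> real) \<Rightarrow> (nat \<Rightarrow> real \<Rightarrow> real)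
     \<Rightarrow> real^'n^'n \<Rightarrow> real^'n^'n \<Rightarrow> real" where
  "ktilde c f C1 C2 = (\<Sum>i. \<Sum>p. kterm c f C1 C2 i p)"

definition hfun :: "real \<Rightarrow> real \<Rightarrow> (real^'n^'n \<Rightarrow> real^'n^'n) \<Rightarrow> real^'n^'n \<Rightarrow> real" where
  "hfun Wi c0 s C = - Wi * trace (s C) + c0"

type_synonym 'n state = "(real^'n \<Rightarrow> real^'n) \<times> (real^'n \<Rightarrow> real^'n^'n)"

definition energy :: "(real^'n) set \<Rightarrow> real \<Rightarrow> (real^'n^'n \<Rightarrow> real) \<Rightarrow> 'n state \<Rightarrow> real" where
  "energy \<Omega> \<theta> h q =
     1/2 * (LINT x|lebesgue_on \<Omega>. (norm (fst q x))\<^sup>2 + \<theta> * h (snd q x))"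

(* The set F of states (measurable u, measurable c with values in D(s))
   of finite energy; as the integrand is nonnegative, E(q) < infinity
   is expressed by integrability of the integrand. *)
definition finite_states :: "(real^'n) set \<Rightarrow> (real^'n^'n) set \<Rightarrow> real
     \<Rightarrow> (real^'n^'n \<Rightarrow> real) \<Rightarrow> 'n state set" where
  "finite_states \<Omega> D \<theta> h = {q.
      fst q \<in> borel_measurable (lebesgue_on \<Omega>) \<and>
      snd q \<in> borel_measurable (lebesgue_on \<Omega>) \<and>
      (\<forall>x\<in>\<Omega>. snd q x \<in> D) \<and>
      integrable (lebesgue_on \<Omega>) (\<lambda>x. (norm (fst q x))\<^sup>2 + \<theta> * h (snd q x))}"

definition state_ae_eq :: "(real^'n) set \<Rightarrow> 'n state \<Rightarrow> 'n state \<Rightarrow> bool" where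
  "state_ae_eq \<Omega> q1 q2 \<longleftrightarrow>
     (AE x in lebesgue_on \<Omega>. fst q1 x = fst q2 x \<and> snd q1 x = snd q2 x)"

definition kintegrand :: "real \<Rightarrow> (real^'n^'n \<Rightarrow> real^'n^'n \<Rightarrow> real)
     \<Rightarrow> 'n state \<Rightarrow> 'n state \<Rightarrow> real^'n \<Rightarrow> real" where
  "kintegrand \<theta> kt q1 q2 x = fst q1 x \<bullet> fst q2 x + \<theta> * kt (snd q1 x) (snd q2 x)"

definition kernel :: "(real^'n) set \<Rightarrow> real \<Rightarrow> (real^'n^'n \<Rightarrow> real^'n^'n \<Rightarrow> real)
     \<Rightarrow> 'n state \<Rightarrow> 'n state \<Rightarrow> real" where
  "kernel \<Omega> \<theta> kt q1 q2 = 1/2 * (LINT x|lebesgue_on \<Omega>. kintegrand \<theta> kt q1 q2 x)"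

definition pos_def_kernel :: "'a set \<Rightarrow> ('a \<Rightarrow> 'a \<Rightarrow> real) \<Rightarrow> bool" where
  "pos_def_kernel X k \<longleftrightarrow>
     (\<forall>m (xs :: nat \<Rightarrow> 'a) (a :: nat \<Rightarrow> real). (\<forall>i<m. xs i \<in> X) \<longrightarrow>
        0 \<le> (\<Sum>i<m. \<Sum>j<m. a i * a j * k (xs i) (xs j)))"

end

(* Tr(f(C1) f(C2)) is the Frobenius inner product of the symmetric matrices f(C1) and f(C2), so
   tilde k is a nonnegative combination of powers <X_i(C1), X_i(C2)>^p with X_i(C) = f_i(C).
   Cauchy-Schwarz gives 2 |<X,Y>|^p <= <X,X>^p + <Y,Y>^p, hence the series is dominated by
   (h(C1) + h(C2)) / 2 and the integrand of k by the mean of the two energy densities; by the Schur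
   product theorem every Gram power (<x_a, x_b>^p) is positive semidefinite, and positive
   definiteness passes to series, to compositions and to integrals.
   For injectivity, k(q1,q1) - 2 k(q1,q2) + k(q2,q2) integrates |u1 - u2|^2 plus theta times a
   series of nonnegative terms c_{i,p} (<X,X>^p - 2 <X,Y>^p + <Y,Y>^p); the distinguished term is
   positive wherever c1 and c2 differ, because f_i(C) determines C when f_i is injective on the
   spectrum.  Measurability of x |-> f(c(x)) for Borel f is obtained by approximation: polynomials,
   continuous functions (Stone-Weierstrass), indicators of open and then of Borel sets, simple
   functions. *)

theory Submission
  imports Defs
begin

section \<open>Spectral calculus of real symmetric matrices\<close>

lemma sym_mat_iff_inner:
  "sym_mat (C::real^'n^'n) \<longleftrightarrow> (\<forall>v w. (C *v v) \<bullet> w = v \<bullet> (C *v w))"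
proof
  assume "sym_mat C"
  then have "transpose C = C" by (simp add: sym_mat_def)
  then show "\<forall>v w. (C *v v) \<bullet> w = v \<bullet> (C *v w)"
    by (metis dot_lmul_matrix vector_transpose_matrix)
next
  assume C: "\<forall>v w. (C *v v) \<bullet> w = v \<bullet> (C *v w)"
  have "transpose C *v v = C *v v" for v
  proof -
    have "(transpose C *v v) \<bullet> w = (C *v v) \<bullet> w" for w
      by (metis C dot_lmul_matrix transpose_transpose vector_transpose_matrix)
    then show ?thesis using vector_eq_rdot by blast
  qed
  then show "sym_mat C" unfolding sym_mat_def using matrix_eq by blast
qed

lemma sym_mat_inner: "sym_mat (C::real^'n^'n) \<Longrightarrow> (C *v v) \<bullet> w = v \<bullet> (C *v w)"
  using sym_mat_iff_inner by blast

lemma eigenvectors_orthogonal: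
  assumes "sym_mat C" "C *v v = l *\<^sub>R v" "C *v w = m *\<^sub>R w" "l \<noteq> m"
  shows "v \<bullet> w = 0"
proof -
  have "l * (v \<bullet> w) = m * (v \<bullet> w)"
    using sym_mat_inner[OF assms(1), of v w] assms(2,3) by simp
  then show ?thesis using assms(4) by simp
qed

lemma finite_mat_spectrum:
  assumes "sym_mat (C::real^'n^'n)"
  shows "finite (mat_spectrum C)"
proof -
  have "\<forall>l\<in>mat_spectrum C. \<exists>v. v \<noteq> 0 \<and> C *v v = l *\<^sub>R v"
    by (simp add: mat_spectrum_def)
  then obtain V where V: "\<And>l. l \<in> mat_spectrum C \<Longrightarrow> V l \<noteq> 0 \<and> C *v V l = l *\<^sub>R V l"
    by metis
  have inj: "inj_on V (mat_spectrum C)"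
  proof (rule inj_onI)
    fix l m assume lm: "l \<in> mat_spectrum C" "m \<in> mat_spectrum C" "V l = V m"
    show "l = m"
    proof (rule ccontr)
      assume "l \<noteq> m"
      then have "V l \<bullet> V m = 0" using eigenvectors_orthogonal[OF assms] V lm by blast
      then show False using lm V by simp
    qed
  qed
  have "pairwise orthogonal (V ` mat_spectrum C)"
    unfolding pairwise_def orthogonal_def
    using eigenvectors_orthogonal[OF assms] V by (metis imageE)
  moreover have "0 \<notin> V ` mat_spectrum C" using V by auto
  ultimately have "independent (V ` mat_spectrum C)"
    using pairwise_orthogonal_independent by blast
  then have "finite (V ` mat_spectrum C)" using finiteI_independent by blast
  then show ?thesis using inj finite_imageD by blast
qed

lemma ex_orthogonal_projection_matrix:
  fixes E :: "(real^'n) set"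
  assumes "subspace E"
  shows "\<exists>P::real^'n^'n. transpose P = P \<and> P ** P = P \<and> range (\<lambda>v. P *v v) = E"
proof -
  obtain B where B: "B \<subseteq> E" "pairwise orthogonal B" "\<And>x. x \<in> B \<Longrightarrow> norm x = 1"
    "independent B" "span B = E"
    using orthonormal_basis_subspace[OF assms] by metis
  have fB: "finite B" using B(4) finiteI_independent by blast
  define g where "g = (\<lambda>x::real^'n. \<Sum>b\<in>B. (x \<bullet> b) *\<^sub>R b)"
  have "linear g" unfolding g_def
    by (intro linear_compose_sum)
      (auto intro!: bounded_linear.linear bounded_linear_scaleR_left bounded_linear_inner_left
        bounded_linear_compose[of "\<lambda>r. r *\<^sub>R _"])
  define P where "P = matrix g"
  have Pv: "P *v x = g x" for x unfolding P_def using matrix_vector_mul(2)[OF \<open>linear g\<close>] by metis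
  have gE: "g x \<in> E" for x
  proof -
    have "g x \<in> span B" unfolding g_def by (intro span_sum span_scale span_base)
    then show ?thesis using B(5) by simp
  qed
  have gid: "x \<in> E \<Longrightarrow> g x = x" for x
    unfolding g_def using orthonormal_basis_expand[OF B(2) B(3) _ fB] B(5) by auto
  have "(P *v x) \<bullet> y = x \<bullet> (P *v y)" for x y
    unfolding Pv g_def by (simp add: inner_sum_left inner_sum_right mult.commute inner_commute)
  then have "transpose P = P" using sym_mat_iff_inner unfolding sym_mat_def by blast
  moreover have "P ** P = P"
    unfolding matrix_eq by (simp add: matrix_vector_mul_assoc[symmetric] Pv gE gid)
  moreover have "range (\<lambda>v. P *v v) = E"
  proof
    show "range (\<lambda>v. P *v v) \<subseteq> E" using gE Pv by auto
    show "E \<subseteq> range (\<lambda>v. P *v v)"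
    proof
      fix x assume "x \<in> E"
      then have "x = P *v x" using gid Pv by simp
      then show "x \<in> range (\<lambda>v. P *v v)" by blast
    qed
  qed
  ultimately show ?thesis by blast
qed

lemma orthogonal_projection_matrix_unique:
  fixes P Q :: "real^'n^'n"
  assumes "transpose P = P" "P ** P = P" "transpose Q = Q" "Q ** Q = Q"
    and "range (\<lambda>v. P *v v) = range (\<lambda>v. Q *v v)"
  shows "P = Q"
proof -
  have fix_range: "A ** B = B"
    if idem: "A ** A = A" and range: "range (\<lambda>v. B *v v) \<subseteq> range (\<lambda>v. A *v v)"
    for A B :: "real^'n^'n"
  proof -
    have "A *v (B *v v) = B *v v" for v
    proof -
      obtain w where "B *v v = A *v w" using range by blast
      then show ?thesis using idem by (simp add: matrix_vector_mul_assoc)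
    qed
    then show ?thesis unfolding matrix_eq by (simp add: matrix_vector_mul_assoc[symmetric])
  qed
  have "P = transpose (Q ** P)" using fix_range[of Q P] assms by simp
  also have "\<dots> = P ** Q" using assms(1,3) by (simp add: matrix_transpose_mul)
  also have "\<dots> = Q" using fix_range[of P Q] assms by simp
  finally show ?thesis .
qed

lemma eigenproj_characterization:
  "transpose (eigenproj C l) = eigenproj C l \<and> eigenproj C l ** eigenproj C l = eigenproj C l \<and>
   range (\<lambda>v. eigenproj C l *v v) = {v. C *v v = l *\<^sub>R v}"
proof -
  have "subspace {v. C *v v = l *\<^sub>R v}"
    unfolding subspace_def
    by (simp add: matrix_vector_right_distrib matrix_vector_mult_scaleR scaleR_add_right)
  then obtain P where P: "transpose P = P \<and> P ** P = P \<and> range (\<lambda>v. P *v v) = {v. C *v v = l *\<^sub>R v}"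
    using ex_orthogonal_projection_matrix by blast
  have "eigenproj C l = P"
    unfolding eigenproj_def
  proof (rule the_equality)
    fix Q assume "transpose Q = Q \<and> Q ** Q = Q \<and> range (\<lambda>v. Q *v v) = {v. C *v v = l *\<^sub>R v}"
    then show "Q = P" using P orthogonal_projection_matrix_unique by metis
  qed (rule P)
  then show ?thesis using P by simp
qed

lemma transpose_eigenproj [simp]: "transpose (eigenproj C l) = eigenproj C l"
  using eigenproj_characterization by blast

lemma eigenproj_idem [simp]: "eigenproj C l ** eigenproj C l = eigenproj C l"
  using eigenproj_characterization by blast

lemma eigenproj_eigenvector: "C *v (eigenproj C l *v v) = l *\<^sub>R (eigenproj C l *v v)"
  using eigenproj_characterization[of C l] by blast

lemma eigenproj_fixes_eigenvector:
  assumes "C *v v = l *\<^sub>R v"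
  shows "eigenproj C l *v v = v"
proof -
  obtain w where "v = eigenproj C l *v w"
    using assms eigenproj_characterization[of C l] by blast
  then show ?thesis by (simp add: matrix_vector_mul_assoc)
qed

lemma inner_eigenproj: "(eigenproj C l *v x) \<bullet> y = x \<bullet> (eigenproj C l *v y)"
  by (metis dot_lmul_matrix transpose_eigenproj vector_transpose_matrix)

lemma eigenproj_kills_other_eigenvector:
  assumes "sym_mat C" "C *v w = m *\<^sub>R w" "l \<noteq> m"
  shows "eigenproj C l *v w = 0"
proof -
  let ?P = "eigenproj C l"
  have "(?P *v w) \<bullet> (?P *v w) = w \<bullet> (?P *v (?P *v w))" by (rule inner_eigenproj)
  also have "\<dots> = w \<bullet> (?P *v w)" by (simp add: matrix_vector_mul_assoc)
  also have "\<dots> = 0"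
    using eigenvectors_orthogonal[OF assms(1) assms(2) eigenproj_eigenvector[of C l w]] assms(3)
    by simp
  finally show ?thesis by simp
qed

lemma eigenproj_mult_eigenproj:
  assumes "sym_mat C" "l \<noteq> m"
  shows "eigenproj C l ** eigenproj C m = 0"
  unfolding matrix_eq
  using eigenproj_kills_other_eigenvector[OF assms(1) eigenproj_eigenvector assms(2)]
  by (simp add: matrix_vector_mul_assoc[symmetric])

lemma matrix_mult_eigenproj: "C ** eigenproj C l = l *\<^sub>R eigenproj C l"
  unfolding matrix_eq
  by (simp add: matrix_vector_mul_assoc[symmetric] eigenproj_eigenvector scaleR_matrix_vector_assoc)

lemma nonneg_quadratic_imp_linear_coeff_zero:
  fixes a b :: real
  assumes "\<forall>t. 0 \<le> 2 * t * a + t\<^sup>2 * b"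
  shows "a = 0"
proof (rule ccontr)
  assume "a \<noteq> 0"
  define s where "s = 1 / (1 + \<bar>b\<bar>)"
  have s0: "s > 0" unfolding s_def by simp
  have "s * b \<le> s * \<bar>b\<bar>" using s0 by (intro mult_left_mono) auto
  also have "s * \<bar>b\<bar> < 1" unfolding s_def by simp
  finally have sb: "s * b - 2 < 0" by simp
  have "0 \<le> 2 * (- a * s) * a + (- a * s)\<^sup>2 * b" using assms by blast
  also have "\<dots> = a\<^sup>2 * s * (s * b - 2)" by (simp add: power2_eq_square algebra_simps)
  also have "\<dots> < 0" using \<open>a \<noteq> 0\<close> s0 sb by (intro mult_pos_neg) auto
  finally show False by simp
qed

lemma psd_form_zero_imp_orthogonal:
  fixes A :: "real^'n^'n"
  assumes "sym_mat A" "subspace W" "v \<in> W" "w \<in> W"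
    and psd: "\<forall>y\<in>W. 0 \<le> y \<bullet> (A *v y)" and zero: "v \<bullet> (A *v v) = 0"
  shows "w \<bullet> (A *v v) = 0"
proof (rule nonneg_quadratic_imp_linear_coeff_zero, intro allI)
  fix t
  have "v + t *\<^sub>R w \<in> W" using assms(2-4) by (simp add: subspace_add subspace_scale)
  then have "0 \<le> (v + t *\<^sub>R w) \<bullet> (A *v (v + t *\<^sub>R w))" using psd by blast
  then show "0 \<le> 2 * t * (w \<bullet> (A *v v)) + t\<^sup>2 * (w \<bullet> (A *v w))"
    using zero sym_mat_inner[OF assms(1), of v w]
    by (simp add: matrix_vector_right_distrib matrix_vector_mult_scaleR inner_add_left
        inner_add_right power2_eq_square algebra_simps inner_commute)
qed

lemma rayleigh_maximizer_eigenvector: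
  fixes C :: "real^'n^'n"
  assumes sym: "sym_mat C" and W: "subspace W" and invariant: "\<And>y. y \<in> W \<Longrightarrow> C *v y \<in> W"
    and v: "v \<in> W" "norm v = 1"
    and vmax: "\<forall>y\<in>W \<inter> sphere 0 1. y \<bullet> (C *v y) \<le> v \<bullet> (C *v v)"
  shows "C *v v = (v \<bullet> (C *v v)) *\<^sub>R v"
proof -
  \<comment> \<open>A is positive semidefinite on W and vanishes at v, so A v is orthogonal to W \<ni> A v\<close>
  define A where "A = (v \<bullet> (C *v v)) *\<^sub>R mat 1 - C"
  have Ay: "A *v y = (v \<bullet> (C *v v)) *\<^sub>R y - C *v y" for y
    unfolding A_def by (simp add: matrix_vector_mult_diff_rdistrib scaleR_matrix_vector_assoc[symmetric])
  have "sym_mat A"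
    unfolding sym_mat_iff_inner Ay using sym_mat_inner[OF sym]
    by (simp add: inner_diff_left inner_diff_right inner_commute)
  moreover have "\<forall>y\<in>W. 0 \<le> y \<bullet> (A *v y)"
  proof
    fix y assume "y \<in> W"
    show "0 \<le> y \<bullet> (A *v y)"
    proof (cases "y = 0")
      case False
      then have "y /\<^sub>R norm y \<in> W \<inter> sphere 0 1" using \<open>y \<in> W\<close> W by (auto simp: subspace_scale)
      then have "(y /\<^sub>R norm y) \<bullet> (C *v (y /\<^sub>R norm y)) \<le> v \<bullet> (C *v v)" using vmax by blast
      then have "(y \<bullet> (C *v y)) / (norm y)\<^sup>2 \<le> v \<bullet> (C *v v)"
        by (simp add: matrix_vector_mult_scaleR power2_eq_square divide_inverse mult_ac)
      then show ?thesis
        using False by (simp add: Ay divide_le_eq inner_diff_right power2_norm_eq_inner)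
    qed simp
  qed
  moreover have "v \<bullet> (A *v v) = 0"
    using v by (simp add: Ay inner_diff_right power2_norm_eq_inner[symmetric])
  moreover have "A *v v \<in> W"
    unfolding Ay using W v invariant by (simp add: subspace_diff subspace_scale)
  ultimately have "(A *v v) \<bullet> (A *v v) = 0" using psd_form_zero_imp_orthogonal W v by blast
  then show ?thesis by (simp add: Ay)
qed

lemma orthogonal_to_eigenvectors_imp_zero:
  assumes sym: "sym_mat (C::real^'n^'n)"
    and x: "\<forall>l v. C *v v = l *\<^sub>R v \<longrightarrow> x \<bullet> v = 0"
  shows "x = 0"
proof (rule ccontr)
  assume "x \<noteq> 0"
  define W where "W = {y::real^'n. \<forall>l v. C *v v = l *\<^sub>R v \<longrightarrow> y \<bullet> v = 0}"
  have W: "subspace W" unfolding W_def subspace_def by (auto simp: inner_add_left) (metis add_0)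
  have invariant: "C *v y \<in> W" if "y \<in> W" for y
    using that sym_mat_inner[OF sym, of y] unfolding W_def by auto
  have "W = (\<Inter>v\<in>{v. \<exists>l. C *v v = l *\<^sub>R v}. {y. y \<bullet> v = 0})" unfolding W_def by auto
  moreover have "closed (\<Inter>v\<in>{v. \<exists>l. C *v v = l *\<^sub>R v}. {y::real^'n. y \<bullet> v = 0})"
    by (intro closed_INT ballI closed_Collect_eq continuous_intros)
  ultimately have "compact (W \<inter> sphere 0 1)" by (simp add: closed_Int_compact)
  moreover have "x /\<^sub>R norm x \<in> W \<inter> sphere 0 1" using x \<open>x \<noteq> 0\<close> unfolding W_def by auto
  moreover have "continuous_on (W \<inter> sphere 0 1) (\<lambda>y. y \<bullet> (C *v y))"
    by (intro continuous_intros matrix_vector_mult_linear_continuous_on)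
  ultimately obtain v where "v \<in> W \<inter> sphere 0 1"
    and vmax: "\<forall>y\<in>W \<inter> sphere 0 1. y \<bullet> (C *v y) \<le> v \<bullet> (C *v v)"
    using continuous_attains_sup[of "W \<inter> sphere 0 1"] by blast
  then have v: "v \<in> W" "norm v = 1" by auto
  then have "C *v v = (v \<bullet> (C *v v)) *\<^sub>R v"
    using rayleigh_maximizer_eigenvector[OF sym W invariant _ _ vmax] by blast
  then have "v \<bullet> v = 0" using v(1) unfolding W_def by blast
  then show False using v(2) by simp
qed

lemma sum_matrix_vector_mult: "(sum A S) *v (x::real^'n) = (\<Sum>a\<in>S. A a *v x)"
  by (induction S rule: infinite_finite_induct) (auto simp: matrix_vector_mult_add_rdistrib)

lemma matrix_vector_mult_sum: "(A::real^'n^'n) *v sum f S = (\<Sum>a\<in>S. A *v f a)"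
  by (induction S rule: infinite_finite_induct) (auto simp: matrix_vector_right_distrib)

lemma matrix_mult_sum_right: "(B::real^'n^'n) ** sum A S = (\<Sum>a\<in>S. B ** A a)"
  by (induction S rule: infinite_finite_induct) (auto simp: matrix_add_ldistrib)

lemma matrix_mult_sum_left: "sum A S ** (B::real^'n^'n) = (\<Sum>a\<in>S. A a ** B)"
proof (induction S rule: infinite_finite_induct)
  case (insert x F)
  have "(A x + sum A F) ** B = A x ** B + sum A F ** B"
    by (vector matrix_matrix_mult_def sum.distrib[symmetric] field_simps)
  then show ?case using insert by simp
qed auto

lemma sum_eigenproj_eigenvector:
  assumes sym: "sym_mat C" and e: "C *v e = m *\<^sub>R e"
  shows "(\<Sum>l\<in>mat_spectrum C. eigenproj C l *v e) = e"
proof (cases "e = 0")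
  case False
  then have m: "m \<in> mat_spectrum C" using e unfolding mat_spectrum_def by blast
  have "(\<Sum>l\<in>mat_spectrum C. eigenproj C l *v e) = (\<Sum>l\<in>mat_spectrum C. if l = m then e else 0)"
    using eigenproj_fixes_eigenvector[OF e] eigenproj_kills_other_eigenvector[OF sym e]
    by (intro sum.cong) auto
  also have "\<dots> = e" using m finite_mat_spectrum[OF sym] by simp
  finally show ?thesis .
qed simp

lemma sum_eigenproj:
  assumes sym: "sym_mat (C::real^'n^'n)"
  shows "(\<Sum>l\<in>mat_spectrum C. eigenproj C l) = mat 1"
  unfolding matrix_eq
proof
  fix x :: "real^'n"
  define y where "y = x - (\<Sum>l\<in>mat_spectrum C. eigenproj C l *v x)"
  have "y = 0"
  proof (rule orthogonal_to_eigenvectors_imp_zero[OF sym], intro allI impI)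
    fix m e assume e: "C *v e = m *\<^sub>R e"
    have "(\<Sum>l\<in>mat_spectrum C. eigenproj C l *v x) \<bullet> e
        = x \<bullet> (\<Sum>l\<in>mat_spectrum C. eigenproj C l *v e)"
      by (simp add: inner_sum_left inner_sum_right inner_eigenproj)
    then show "y \<bullet> e = 0"
      unfolding y_def using sum_eigenproj_eigenvector[OF sym e] by (simp add: inner_diff_left)
  qed
  then show "(\<Sum>l\<in>mat_spectrum C. eigenproj C l) *v x = mat 1 *v x"
    by (simp add: sum_matrix_vector_mult y_def)
qed

lemma sum_eigenproj_apply:
  assumes "sym_mat C"
  shows "(\<Sum>l\<in>mat_spectrum C. eigenproj C l *v x) = x"
  using sum_eigenproj[OF assms] by (simp flip: sum_matrix_vector_mult)

lemma matfun_cong: "(\<And>l. l \<in> mat_spectrum C \<Longrightarrow> g l = h l) \<Longrightarrow> matfun g C = matfun h C"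
  unfolding matfun_def by (intro sum.cong) auto

lemma matfun_add: "matfun (\<lambda>t. g t + h t) C = matfun g C + matfun h C"
  unfolding matfun_def by (simp add: scaleR_add_left sum.distrib)

lemma matfun_cmult: "matfun (\<lambda>t. a * g t) C = a *\<^sub>R matfun g C"
  unfolding matfun_def by (simp add: scaleR_sum_right)

lemma matfun_const: "sym_mat C \<Longrightarrow> matfun (\<lambda>t. a) C = a *\<^sub>R mat 1"
  unfolding matfun_def by (simp add: scaleR_sum_right[symmetric] sum_eigenproj)

lemma matfun_id: "sym_mat C \<Longrightarrow> matfun (\<lambda>t. t) C = C"
  using matrix_mult_sum_right[of C "eigenproj C" "mat_spectrum C"]
  by (simp add: sum_eigenproj matfun_def matrix_mult_eigenproj)

lemma matfun_mult:
  assumes "sym_mat C"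
  shows "matfun (\<lambda>t. g t * h t) C = matfun g C ** matfun h C"
proof -
  let ?S = "mat_spectrum C" and ?P = "eigenproj C"
  have "matfun g C ** matfun h C = (\<Sum>l\<in>?S. \<Sum>m\<in>?S. (g l * h m) *\<^sub>R (?P l ** ?P m))"
  proof -
    have "matfun g C ** matfun h C = (\<Sum>l\<in>?S. (g l *\<^sub>R ?P l) ** matfun h C)"
      unfolding matfun_def[of g] matrix_mult_sum_left ..
    also have "\<dots> = (\<Sum>l\<in>?S. \<Sum>m\<in>?S. (g l *\<^sub>R ?P l) ** (h m *\<^sub>R ?P m))"
      unfolding matfun_def[of h] matrix_mult_sum_right ..
    finally show ?thesis by (simp add: matrix_scalar_ac scalar_matrix_assoc[symmetric] mult.commute)
  qed
  also have "\<dots> = (\<Sum>l\<in>?S. \<Sum>m\<in>?S. if m = l then (g l * h l) *\<^sub>R ?P l else 0)"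
    using eigenproj_mult_eigenproj[OF assms] by (intro sum.cong refl) auto
  also have "\<dots> = matfun (\<lambda>t. g t * h t) C"
    unfolding matfun_def using finite_mat_spectrum[OF assms] by simp
  finally show ?thesis by simp
qed

lemma inner_matfun: "(matfun g C *v x) \<bullet> y = x \<bullet> (matfun g C *v y)"
  unfolding matfun_def sum_matrix_vector_mult
  by (simp add: inner_sum_left inner_sum_right scaleR_matrix_vector_assoc[symmetric] inner_eigenproj)

lemma transpose_matfun: "transpose (matfun g C) = matfun g C"
  using inner_matfun sym_mat_iff_inner unfolding sym_mat_def by blast

lemma matfun_eigenvector:
  assumes "sym_mat C" and "C *v v = l *\<^sub>R v"
  shows "matfun g C *v v = g l *\<^sub>R v"
proof (cases "v = 0")
  case False
  then have l: "l \<in> mat_spectrum C" using assms(2) unfolding mat_spectrum_def by blast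
  have "matfun g C *v v = (\<Sum>m\<in>mat_spectrum C. if m = l then g l *\<^sub>R v else 0)"
    unfolding matfun_def sum_matrix_vector_mult
    using eigenproj_fixes_eigenvector[OF assms(2)] eigenproj_kills_other_eigenvector[OF assms]
    by (intro sum.cong) (auto simp: scaleR_matrix_vector_assoc[symmetric])
  then show ?thesis using l finite_mat_spectrum[OF assms(1)] by simp
qed simp

lemma eigenproj_mult_matfun:
  assumes "sym_mat C" and "m \<in> mat_spectrum C"
  shows "eigenproj C m ** matfun g C = g m *\<^sub>R eigenproj C m"
proof -
  have "eigenproj C m ** matfun g C
      = (\<Sum>l\<in>mat_spectrum C. g l *\<^sub>R (eigenproj C m ** eigenproj C l))"
    unfolding matfun_def matrix_mult_sum_right
    by (simp add: matrix_scalar_ac scalar_matrix_assoc[symmetric])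
  also have "\<dots> = (\<Sum>l\<in>mat_spectrum C. if l = m then g m *\<^sub>R eigenproj C m else 0)"
    using eigenproj_mult_eigenproj[OF assms(1)] by (intro sum.cong refl) auto
  finally show ?thesis using assms finite_mat_spectrum[OF assms(1)] by simp
qed

lemma matfun_eigenvector_imp_eigenvector:
  assumes sym: "sym_mat C" and inj: "inj_on g (insert l (mat_spectrum C))"
    and v: "matfun g C *v v = g l *\<^sub>R v"
  shows "C *v v = l *\<^sub>R v"
proof -
  have "m *\<^sub>R (eigenproj C m *v v) = l *\<^sub>R (eigenproj C m *v v)" if m: "m \<in> mat_spectrum C" for m
  proof (cases "m = l")
    case False
    have "g m *\<^sub>R (eigenproj C m *v v) = eigenproj C m *v (matfun g C *v v)"
      by (simp add: matrix_vector_mul_assoc eigenproj_mult_matfun[OF sym m]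
          scaleR_matrix_vector_assoc[symmetric])
    also have "\<dots> = g l *\<^sub>R (eigenproj C m *v v)" using v by (simp add: matrix_vector_mult_scaleR)
    finally have "(g m - g l) *\<^sub>R (eigenproj C m *v v) = 0" by (simp add: scaleR_diff_left)
    moreover have "g m \<noteq> g l" using inj m False unfolding inj_on_def by blast
    ultimately show ?thesis by simp
  qed simp
  then have "(\<Sum>m\<in>mat_spectrum C. C *v (eigenproj C m *v v))
      = (\<Sum>m\<in>mat_spectrum C. l *\<^sub>R (eigenproj C m *v v))"
    by (intro sum.cong) (simp_all add: eigenproj_eigenvector)
  then show ?thesis
    by (simp add: sum_eigenproj_apply[OF sym] flip: matrix_vector_mult_sum scaleR_sum_right)
qed

lemma matfun_inj:
  assumes sym: "sym_mat C1" "sym_mat C2"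
    and inj: "inj_on g (mat_spectrum C1 \<union> mat_spectrum C2)"
    and eq: "matfun g C1 = matfun g C2"
  shows "C1 = C2"
proof -
  have "C2 *v (eigenproj C1 l *v x) = C1 *v (eigenproj C1 l *v x)"
    if l: "l \<in> mat_spectrum C1" for l x
  proof -
    have "matfun g C2 *v (eigenproj C1 l *v x) = g l *\<^sub>R (eigenproj C1 l *v x)"
      using matfun_eigenvector[OF sym(1) eigenproj_eigenvector] eq by metis
    then have "C2 *v (eigenproj C1 l *v x) = l *\<^sub>R (eigenproj C1 l *v x)"
      using l inj_on_subset[OF inj]
      by (intro matfun_eigenvector_imp_eigenvector[OF sym(2)]) auto
    then show ?thesis by (simp add: eigenproj_eigenvector)
  qed
  then have "C2 *v x = C1 *v x" for x
    using sum_eigenproj_apply[OF sym(1), of x] by (metis (no_types, lifting) matrix_vector_mult_sum sum.cong)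
  then show ?thesis using matrix_eq by metis
qed

lemma trace_mult_transpose: "trace ((A::real^'n^'n) ** transpose B) = A \<bullet> B"
  by (simp add: trace_def matrix_matrix_mult_def transpose_def inner_vec_def)

lemma trace_matfun_mult: "trace (matfun g C1 ** matfun h C2) = matfun g C1 \<bullet> matfun h C2"
  using trace_mult_transpose[of "matfun g C1" "matfun h C2"] by (simp add: transpose_matfun)

lemma trace_projection_mult_nonneg:
  fixes P Q :: "real^'n^'n"
  assumes "transpose P = P" "P ** P = P" "transpose Q = Q" "Q ** Q = Q"
  shows "0 \<le> trace (P ** Q)"
proof -
  have "trace (P ** Q) = trace ((P ** P) ** (Q ** Q))" using assms by simp
  also have "\<dots> = trace (P ** (P ** Q ** Q))" by (simp add: matrix_mul_assoc)
  also have "\<dots> = trace ((P ** Q ** Q) ** P)" by (rule trace_mul_sym)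
  also have "\<dots> = trace ((P ** Q) ** transpose (P ** Q))"
    using assms by (simp add: matrix_transpose_mul matrix_mul_assoc)
  also have "\<dots> = (P ** Q) \<bullet> (P ** Q)" by (rule trace_mult_transpose)
  finally show ?thesis by simp
qed

lemma inner_matfun_nonneg:
  assumes "\<forall>t\<in>mat_spectrum C1 \<union> mat_spectrum C2. 0 \<le> g t"
  shows "0 \<le> matfun g C1 \<bullet> matfun g C2"
proof -
  have "matfun g C1 \<bullet> matfun g C2 = (\<Sum>l\<in>mat_spectrum C1. \<Sum>m\<in>mat_spectrum C2.
           (g l * g m) * trace (eigenproj C1 l ** eigenproj C2 m))"
    using trace_mult_transpose[of "eigenproj C1 _" "eigenproj C2 _"]
    by (simp add: matfun_def inner_sum_left inner_sum_right sum_distrib_left mult_ac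
        sum.swap[of _ "mat_spectrum C2"])
  also have "\<dots> \<ge> 0"
    using assms by (intro sum_nonneg mult_nonneg_nonneg trace_projection_mult_nonneg) auto
  finally show ?thesis .
qed

section \<open>Measurability of the functional calculus\<close>

lemma simple_function_restrict_space_borel_eq:
  fixes F :: "real \<Rightarrow> real"
  assumes F: "simple_function (restrict_space borel S) F"
  obtains B where "finite (F ` S)" "\<And>y. y \<in> F ` S \<Longrightarrow> B y \<in> sets borel"
    "\<And>t. t \<in> S \<Longrightarrow> F t = (\<Sum>y\<in>F ` S. y * indicator (B y) t)"
proof -
  let ?M = "restrict_space borel S"
  have sp: "space ?M = S" by (simp add: space_restrict_space)
  have "\<forall>y\<in>F ` S. \<exists>B\<in>sets borel. F -` {y} \<inter> S = S \<inter> B"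
  proof
    fix y assume "y \<in> F ` S"
    then have "F -` {y} \<inter> space ?M \<in> sets ?M" using F sp by (auto simp: simple_function_def)
    then have "F -` {y} \<inter> S \<in> (\<inter>) S ` sets borel" using sp sets_restrict_space[of borel S] by simp
    then show "\<exists>B\<in>sets borel. F -` {y} \<inter> S = S \<inter> B" by blast
  qed
  then obtain B where B: "\<forall>y\<in>F ` S. B y \<in> sets borel \<and> F -` {y} \<inter> S = S \<inter> B y"
    using bchoice[of "F ` S" "\<lambda>y B. B \<in> sets borel \<and> F -` {y} \<inter> S = S \<inter> B"] by blast
  show thesis
  proof (rule that)
    show "finite (F ` S)" using F sp unfolding simple_function_def by simp
    show "B y \<in> sets borel" if "y \<in> F ` S" for y using B that by blast
    fix t assume t: "t \<in> S"
    have "F t = (\<Sum>y\<in>F ` space ?M. indicator (F -` {y} \<inter> space ?M) t *\<^sub>R y)"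
      by (rule simple_function_indicator_representation_banach[OF F]) (simp add: sp t)
    also have "\<dots> = (\<Sum>y\<in>F ` S. indicator (F -` {y} \<inter> S) t *\<^sub>R y)"
      unfolding sp ..
    also have "\<dots> = (\<Sum>y\<in>F ` S. y * indicator (B y) t)"
    proof (rule sum.cong[OF refl])
      fix y assume "y \<in> F ` S"
      then have "F -` {y} \<inter> S = S \<inter> B y" using B by blast
      then show "indicator (F -` {y} \<inter> S) t *\<^sub>R y = y * indicator (B y) t"
        using t by (simp add: indicator_def)
    qed
    finally show "F t = (\<Sum>y\<in>F ` S. y * indicator (B y) t)" .
  qed
qed

locale sym_matrix_field =
  fixes M :: "'a measure" and c :: "'a \<Rightarrow> real^'n^'n" and S :: "real set"
  assumes c_measurable: "c \<in> borel_measurable M"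
    and c_sym: "\<And>x. x \<in> space M \<Longrightarrow> sym_mat (c x)"
    and c_spectrum: "\<And>x. x \<in> space M \<Longrightarrow> mat_spectrum (c x) \<subseteq> S"
begin

definition matfun_measurable :: "(real \<Rightarrow> real) \<Rightarrow> bool" where
  "matfun_measurable g \<longleftrightarrow> (\<lambda>x. matfun g (c x)) \<in> borel_measurable M"

lemma matfun_measurable_cong:
  assumes "matfun_measurable g" "\<And>t. t \<in> S \<Longrightarrow> g t = h t"
  shows "matfun_measurable h"
proof -
  have "\<And>x. x \<in> space M \<Longrightarrow> matfun g (c x) = matfun h (c x)"
    using c_spectrum assms(2) by (intro matfun_cong) blast
  then show ?thesis using assms(1) measurable_cong unfolding matfun_measurable_def by metis
qed

lemma matfun_measurable_add:
  "matfun_measurable g \<Longrightarrow> matfun_measurable h \<Longrightarrow> matfun_measurable (\<lambda>t. g t + h t)"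
  unfolding matfun_measurable_def matfun_add by (rule borel_measurable_add)

lemma matfun_measurable_cmult: "matfun_measurable g \<Longrightarrow> matfun_measurable (\<lambda>t. a * g t)"
  unfolding matfun_measurable_def matfun_cmult by (intro borel_measurable_scaleR borel_measurable_const)

lemma matfun_measurable_mult:
  assumes "matfun_measurable g" "matfun_measurable h"
  shows "matfun_measurable (\<lambda>t. g t * h t)"
proof -
  have "continuous_on UNIV (\<lambda>p::(real^'n^'n) \<times> (real^'n^'n). fst p ** snd p)"
    unfolding matrix_matrix_mult_def by (intro continuous_intros)
  then have "(\<lambda>x. matfun g (c x) ** matfun h (c x)) \<in> borel_measurable M"
    using assms unfolding matfun_measurable_def
    by (intro borel_measurable_continuous_Pair[where H="\<lambda>A B. A ** B"]) auto
  moreover have "\<And>x. x \<in> space M \<Longrightarrow> matfun (\<lambda>t. g t * h t) (c x) = matfun g (c x) ** matfun h (c x)"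
    using c_sym matfun_mult by blast
  ultimately show ?thesis unfolding matfun_measurable_def using measurable_cong by (metis (no_types, lifting))
qed

lemma matfun_measurable_const: "matfun_measurable (\<lambda>t. a)"
proof -
  have "\<And>x. x \<in> space M \<Longrightarrow> matfun (\<lambda>t. a) (c x) = a *\<^sub>R mat 1"
    using c_sym matfun_const by blast
  moreover have "(\<lambda>x. a *\<^sub>R (mat 1::real^'n^'n)) \<in> borel_measurable M" by simp
  ultimately show ?thesis unfolding matfun_measurable_def
    using measurable_cong[of M "\<lambda>x. matfun (\<lambda>t. a) (c x)" "\<lambda>x. a *\<^sub>R mat 1"] by blast
qed

lemma matfun_measurable_id: "matfun_measurable (\<lambda>t. t)"
proof -
  have "\<And>x. x \<in> space M \<Longrightarrow> matfun (\<lambda>t. t) (c x) = c x"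
    using c_sym matfun_id by blast
  then show ?thesis unfolding matfun_measurable_def using measurable_cong c_measurable
    by (metis (no_types, lifting))
qed

lemma matfun_measurable_sum:
  "finite I \<Longrightarrow> (\<And>i. i \<in> I \<Longrightarrow> matfun_measurable (g i)) \<Longrightarrow> matfun_measurable (\<lambda>t. \<Sum>i\<in>I. g i t)"
proof (induction I rule: finite_induct)
  case empty
  then show ?case using matfun_measurable_const[of 0] by simp
qed (simp add: matfun_measurable_add)

lemma matfun_measurable_polynomial: "real_polynomial_function p \<Longrightarrow> matfun_measurable p"
proof (induction rule: real_polynomial_function.induct)
  case (linear f)
  then have "f = (\<lambda>t. f 1 * t)" by (metis real_bounded_linear mult.commute mult_1)
  then show ?case using matfun_measurable_cmult[OF matfun_measurable_id] by metis
qed (auto intro: matfun_measurable_const matfun_measurable_add matfun_measurable_mult)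

lemma matfun_measurable_limit:
  assumes "\<And>i. matfun_measurable (G i)" and "\<And>t. t \<in> S \<Longrightarrow> (\<lambda>i. G i t) \<longlonglongrightarrow> g t"
  shows "matfun_measurable g"
  unfolding matfun_measurable_def
proof (rule borel_measurable_LIMSEQ_metric)
  show "(\<lambda>x. matfun (G i) (c x)) \<in> borel_measurable M" for i
    using assms(1) unfolding matfun_measurable_def by blast
  fix x assume "x \<in> space M"
  then show "(\<lambda>i. matfun (G i) (c x)) \<longlonglongrightarrow> matfun g (c x)"
    unfolding matfun_def using c_spectrum assms(2) by (intro tendsto_sum tendsto_scaleR tendsto_const) auto
qed

lemma matfun_measurable_continuous:
  assumes "continuous_on UNIV g"
  shows "matfun_measurable g"
proof -
  have "\<exists>p. real_polynomial_function p \<and> (\<forall>t\<in>{-real n..real n}. \<bar>g t - p t\<bar> < inverse (real (Suc n)))" for n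
    using Stone_Weierstrass_real_polynomial_function[of "{-real n..real n}" g]
      continuous_on_subset[OF assms] by (metis compact_Icc subset_UNIV positive_imp_inverse_positive of_nat_0_less_iff zero_less_Suc)
  then obtain P where P: "\<And>n. real_polynomial_function (P n)"
    and approx: "\<And>n t. t \<in> {-real n..real n} \<Longrightarrow> \<bar>g t - P n t\<bar> < inverse (real (Suc n))" by metis
  show ?thesis
  proof (rule matfun_measurable_limit[of P])
    show "matfun_measurable (P n)" for n using P matfun_measurable_polynomial by blast
    fix t :: real
    have "eventually (\<lambda>n. norm (P n t - g t) \<le> inverse (real (Suc n))) sequentially"
      unfolding eventually_sequentially
    proof (intro exI allI impI)
      fix n assume "nat \<lceil>\<bar>t\<bar>\<rceil> \<le> n"
      then have "\<bar>t\<bar> \<le> real n" using real_nat_ceiling_ge[of "\<bar>t\<bar>"] by (meson of_nat_le_iff order_trans)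
      then have "t \<in> {-real n..real n}" by auto
      then show "norm (P n t - g t) \<le> inverse (real (Suc n))" using approx by fastforce
    qed
    then show "(\<lambda>n. P n t) \<longlonglongrightarrow> g t"
      unfolding Lim_null[of "\<lambda>n. P n t"] using LIMSEQ_inverse_real_of_nat by (rule Lim_null_comparison)
  qed
qed

lemma matfun_measurable_indicator_open:
  assumes "open U"
  shows "matfun_measurable (indicator U)"
proof (cases "U = UNIV")
  case True
  then show ?thesis using matfun_measurable_const[of 1] by simp
next
  case False
  define G where "G = (\<lambda>(n::nat) t. min 1 (real n * infdist t (- U)))"
  show ?thesis
  proof (rule matfun_measurable_limit[of G])
    have "continuous_on UNIV (G n)" for n unfolding G_def by (intro continuous_intros)
    then show "matfun_measurable (G n)" for n by (rule matfun_measurable_continuous)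
    fix t :: real
    show "(\<lambda>n. G n t) \<longlonglongrightarrow> indicator U t"
    proof (cases "t \<in> U")
      case True
      have d: "infdist t (- U) > 0"
        using False True assms by (intro infdist_pos_not_in_closed) auto
      obtain k :: nat where k: "1 / infdist t (- U) < real k" using reals_Archimedean2 by blast
      have "eventually (\<lambda>n. G n t = indicator U t) sequentially"
        unfolding eventually_sequentially
      proof (intro exI allI impI)
        fix n assume "k \<le> n"
        then have "1 / infdist t (- U) < real n" using k by linarith
        then have "1 \<le> real n * infdist t (- U)" using d by (simp add: divide_less_eq)
        then show "G n t = indicator U t" using True unfolding G_def by simp
      qed
      then show ?thesis by (rule tendsto_eventually)
    qed (simp add: G_def)
  qed
qed

lemma matfun_measurable_indicator_borel:
  assumes "A \<in> sets borel"
  shows "matfun_measurable (indicator A)"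
proof -
  have "Int_stable {U::real set. open U}" by (auto simp: Int_stable_def)
  moreover have "{U::real set. open U} \<subseteq> Pow UNIV" by simp
  moreover have "A \<in> sigma_sets UNIV {U. open U}" using assms sets_borel by blast
  ultimately show ?thesis
  proof (induct A rule: sigma_sets_induct_disjoint)
    case (basic A)
    then show ?case by (simp add: matfun_measurable_indicator_open)
  next
    case empty
    then show ?case using matfun_measurable_const[of 0] by simp
  next
    case (compl A)
    then have "matfun_measurable (\<lambda>t. 1 + (-1) * indicator A t)"
      by (intro matfun_measurable_add matfun_measurable_const matfun_measurable_cmult)
    moreover have "(\<lambda>t. 1 + (-1) * indicator A t) = (indicator (UNIV - A) :: real \<Rightarrow> real)"
      by (auto simp: indicator_def)
    ultimately show ?case by simp
  next
    case (union A)
    show ?case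
    proof (rule matfun_measurable_limit[of "\<lambda>n t. \<Sum>i<n. indicator (A i) t"])
      show "matfun_measurable (\<lambda>t. \<Sum>i<n. indicator (A i) t)" for n
        using union(3) by (intro matfun_measurable_sum) auto
      show "(\<lambda>n. \<Sum>i<n. indicator (A i) t) \<longlonglongrightarrow> (indicator (\<Union>i. A i) t :: real)" for t
        using indicator_sums[of A t] union(1) unfolding disjoint_family_on_def sums_def by blast
    qed
  qed
qed

lemma borel_measurable_matfun:
  assumes "g \<in> borel_measurable (restrict_space borel S)"
  shows "(\<lambda>x. matfun g (c x)) \<in> borel_measurable M"
proof -
  obtain F where F: "\<And>i. simple_function (restrict_space borel S) (F i)"
    and lim: "\<And>t. t \<in> space (restrict_space borel S) \<Longrightarrow> (\<lambda>i. F i t) \<longlonglongrightarrow> g t"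
    using borel_measurable_implies_sequence_metric[OF assms, of 0] by blast
  have "matfun_measurable (F i)" for i
  proof -
    obtain B where fin: "finite (F i ` S)" and B: "\<And>y. y \<in> F i ` S \<Longrightarrow> B y \<in> sets borel"
      and F_eq: "\<And>t. t \<in> S \<Longrightarrow> F i t = (\<Sum>y\<in>F i ` S. y * indicator (B y) t)"
      using simple_function_restrict_space_borel_eq[OF F[of i]] by blast
    have "matfun_measurable (\<lambda>t. \<Sum>y\<in>F i ` S. y * indicator (B y) t)"
      using fin B by (intro matfun_measurable_sum matfun_measurable_cmult matfun_measurable_indicator_borel)
    then show ?thesis by (rule matfun_measurable_cong) (rule F_eq[symmetric])
  qed
  then have "matfun_measurable g"
    by (rule matfun_measurable_limit[of F]) (simp_all add: lim space_restrict_space)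
  then show ?thesis unfolding matfun_measurable_def .
qed

end

section \<open>Power series in inner products\<close>

definition inner_series :: "(nat \<Rightarrow> nat \<Rightarrow> real) \<Rightarrow> (nat \<Rightarrow> 'a::real_inner) \<Rightarrow> (nat \<Rightarrow> 'a) \<Rightarrow> real"
  where "inner_series c X Y = (\<Sum>i. \<Sum>p. c i p * (X i \<bullet> Y i) ^ p)"

definition norm_series_sums :: "(nat \<Rightarrow> nat \<Rightarrow> real) \<Rightarrow> (nat \<Rightarrow> 'a::real_inner) \<Rightarrow> real \<Rightarrow> bool"
  where "norm_series_sums c X h \<longleftrightarrow>
    (\<forall>i. summable (\<lambda>p. c i p * (X i \<bullet> X i) ^ p)) \<and> (\<lambda>i. \<Sum>p. c i p * (X i \<bullet> X i) ^ p) sums h"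

lemma power2_norm_power: "(norm x ^ p)\<^sup>2 = (x \<bullet> x) ^ p"
  by (metis power2_norm_eq_inner power_mult mult.commute)

lemma two_abs_inner_power_le:
  fixes x y :: "'a::real_inner"
  shows "2 * \<bar>x \<bullet> y\<bar> ^ p \<le> (x \<bullet> x) ^ p + (y \<bullet> y) ^ p"
proof -
  have "\<bar>x \<bullet> y\<bar> ^ p \<le> norm x ^ p * norm y ^ p"
    using Cauchy_Schwarz_ineq2[of x y] by (simp add: power_mono flip: power_mult_distrib)
  moreover have "2 * norm x ^ p * norm y ^ p \<le> (norm x ^ p)\<^sup>2 + (norm y ^ p)\<^sup>2"
    by (rule sum_squares_bound)
  ultimately show ?thesis unfolding power2_norm_power by linarith
qed

lemma inner_power_distance_nonneg:
  fixes x y :: "'a::real_inner"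
  shows "0 \<le> (x \<bullet> x) ^ p - 2 * (x \<bullet> y) ^ p + (y \<bullet> y) ^ p"
  using two_abs_inner_power_le[of x y p] abs_ge_self[of "(x \<bullet> y) ^ p"] by (simp add: power_abs)

lemma inner_power_distance_pos:
  fixes x y :: "'a::real_inner"
  assumes "x \<noteq> y" "1 \<le> p" "odd p \<or> 0 \<le> x \<bullet> y"
  shows "0 < (x \<bullet> x) ^ p - 2 * (x \<bullet> y) ^ p + (y \<bullet> y) ^ p"
proof (cases "x \<bullet> y < 0")
  case True
  then have "(x \<bullet> y) ^ p < 0" using assms(3) by (simp add: power_less_zero_eq)
  moreover have "0 \<le> (x \<bullet> x) ^ p" "0 \<le> (y \<bullet> y) ^ p" by auto
  ultimately show ?thesis by linarith
next
  case False
  have bound: "(x \<bullet> y) ^ p \<le> norm x ^ p * norm y ^ p"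
    using False Cauchy_Schwarz_ineq2[of x y] by (simp add: power_mono flip: power_mult_distrib)
  show ?thesis
  proof (cases "norm x = norm y")
    case True
    then have "x \<bullet> x = y \<bullet> y" by (simp add: power2_norm_eq_inner[symmetric])
    moreover have "0 < (x - y) \<bullet> (x - y)" using assms(1) by simp
    ultimately have "x \<bullet> y < x \<bullet> x" by (simp add: inner_diff_left inner_diff_right inner_commute)
    then have "(x \<bullet> y) ^ p < (x \<bullet> x) ^ p" using False assms(2) by (intro power_strict_mono) auto
    then show ?thesis using \<open>x \<bullet> x = y \<bullet> y\<close> by simp
  next
    case False
    then have "norm x ^ p \<noteq> norm y ^ p" using assms(2) by (simp add: power_eq_iff_eq_base)
    then have "0 < (norm x ^ p - norm y ^ p)\<^sup>2" by simp
    then show ?thesis using bound unfolding power2_diff power2_norm_power by linarith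
  qed
qed

lemma summable_inner_series_abs:
  assumes c: "\<And>i p. 0 \<le> c i p" and X: "norm_series_sums c X hx" and Y: "norm_series_sums c Y hy"
  shows "summable (\<lambda>p. \<bar>c i p * (X i \<bullet> Y i) ^ p\<bar>)"
    and "summable (\<lambda>i. \<Sum>p. \<bar>c i p * (X i \<bullet> Y i) ^ p\<bar>)"
    and "(\<Sum>i. \<Sum>p. \<bar>c i p * (X i \<bullet> Y i) ^ p\<bar>) \<le> (hx + hy) / 2"
proof -
  let ?t = "\<lambda>i p. \<bar>c i p * (X i \<bullet> Y i) ^ p\<bar>"
  let ?g = "\<lambda>i p. (c i p * (X i \<bullet> X i) ^ p + c i p * (Y i \<bullet> Y i) ^ p) / 2"
  let ?G = "\<lambda>i. ((\<Sum>p. c i p * (X i \<bullet> X i) ^ p) + (\<Sum>p. c i p * (Y i \<bullet> Y i) ^ p)) / 2"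
  have le: "?t i p \<le> ?g i p" for i p
    using mult_left_mono[OF two_abs_inner_power_le[of "X i" "Y i" p] c[of i p]]
    by (simp add: abs_mult power_abs c algebra_simps)
  have g_sums: "?g i sums ?G i" for i
    using X Y unfolding norm_series_sums_def by (intro sums_divide sums_add summable_sums) blast+
  have G_sums: "?G sums ((hx + hy) / 2)"
    using X Y unfolding norm_series_sums_def by (intro sums_divide sums_add) blast+
  have t_summable: "summable (?t i)" for i
    by (rule summable_comparison_test'[OF sums_summable[OF g_sums[of i]], of 0])
      (simp only: real_norm_def abs_abs le)
  then show "summable (?t i)" for i .
  have T_le: "(\<Sum>p. ?t i p) \<le> ?G i" for i
    by (rule sums_le[OF le summable_sums[OF t_summable] g_sums])
  have T_nonneg: "0 \<le> (\<Sum>p. ?t i p)" for i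
    using t_summable by (rule suminf_nonneg) simp
  have T_summable: "summable (\<lambda>i. \<Sum>p. ?t i p)"
    by (rule summable_comparison_test'[OF sums_summable[OF G_sums], of 0])
      (simp only: real_norm_def abs_of_nonneg[OF T_nonneg] T_le)
  then show "summable (\<lambda>i. \<Sum>p. ?t i p)" .
  show "(\<Sum>i. \<Sum>p. ?t i p) \<le> (hx + hy) / 2"
    by (rule sums_le[OF T_le summable_sums[OF T_summable] G_sums])
qed

lemma summable_inner_series:
  assumes "\<And>i p. 0 \<le> c i p" "norm_series_sums c X hx" "norm_series_sums c Y hy"
  shows "summable (\<lambda>p. c i p * (X i \<bullet> Y i) ^ p)"
    and "summable (\<lambda>i. \<bar>\<Sum>p. c i p * (X i \<bullet> Y i) ^ p\<bar>)"
    and "(\<lambda>i. \<Sum>p. c i p * (X i \<bullet> Y i) ^ p) sums inner_series c X Y"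
proof -
  note abs_summable = summable_inner_series_abs[OF assms]
  show "summable (\<lambda>p. c i p * (X i \<bullet> Y i) ^ p)" for i
    using abs_summable(1) by (rule summable_rabs_cancel)
  show outer: "summable (\<lambda>i. \<bar>\<Sum>p. c i p * (X i \<bullet> Y i) ^ p\<bar>)"
    by (rule summable_comparison_test'[OF abs_summable(2), of 0])
      (simp add: summable_rabs abs_summable(1))
  show "(\<lambda>i. \<Sum>p. c i p * (X i \<bullet> Y i) ^ p) sums inner_series c X Y"
    unfolding inner_series_def by (rule summable_sums[OF summable_rabs_cancel[OF outer]])
qed

lemma abs_inner_series_le:
  assumes "\<And>i p. 0 \<le> c i p" "norm_series_sums c X hx" "norm_series_sums c Y hy"
  shows "\<bar>inner_series c X Y\<bar> \<le> (hx + hy) / 2"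
proof -
  note abs_summable = summable_inner_series_abs[OF assms]
  note summable = summable_inner_series[OF assms]
  have "\<bar>inner_series c X Y\<bar> \<le> (\<Sum>i. \<bar>\<Sum>p. c i p * (X i \<bullet> Y i) ^ p\<bar>)"
    unfolding inner_series_def using summable(2) by (rule summable_rabs)
  also have "\<dots> \<le> (\<Sum>i. \<Sum>p. \<bar>c i p * (X i \<bullet> Y i) ^ p\<bar>)"
    using summable_rabs[OF abs_summable(1)] summable(2) abs_summable(2) by (rule suminf_le)
  also have "\<dots> \<le> (hx + hy) / 2" by (rule abs_summable(3))
  finally show ?thesis .
qed

lemma inner_series_diag: "norm_series_sums c X h \<Longrightarrow> inner_series c X X = h"
  unfolding norm_series_sums_def inner_series_def by (auto dest: sums_unique)

lemma norm_series_sums_nonneg: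
  assumes c: "\<And>i p. 0 \<le> c i p" and X: "norm_series_sums c X h"
  shows "0 \<le> h"
proof -
  have "0 \<le> (\<Sum>p. c i p * (X i \<bullet> X i) ^ p)" for i
    using X unfolding norm_series_sums_def by (intro suminf_nonneg) (simp_all add: c)
  moreover have "(\<lambda>i. \<Sum>p. c i p * (X i \<bullet> X i) ^ p) sums h"
    using X unfolding norm_series_sums_def by blast
  ultimately show ?thesis by (rule sums_le[OF _ sums_zero])
qed

lemma inner_series_distance_sums:
  assumes "\<And>i p. 0 \<le> c i p" and X: "norm_series_sums c X hx" and Y: "norm_series_sums c Y hy"
  defines "d \<equiv> \<lambda>i p. c i p * ((X i \<bullet> X i) ^ p - 2 * (X i \<bullet> Y i) ^ p + (Y i \<bullet> Y i) ^ p)"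
  shows "summable (d i)" and "(\<lambda>i. \<Sum>p. d i p) sums (hx - 2 * inner_series c X Y + hy)"
proof -
  let ?S = "\<lambda>X Y i. \<Sum>p. c i p * (X i \<bullet> Y i) ^ p"
  note XY = summable_inner_series[OF assms(1) X Y]
  have XX: "(\<lambda>p. c i p * (X i \<bullet> X i) ^ p) sums ?S X X i"
    and YY: "(\<lambda>p. c i p * (Y i \<bullet> Y i) ^ p) sums ?S Y Y i" for i
    using X Y unfolding norm_series_sums_def by (simp_all add: summable_sums)
  have "d i = (\<lambda>p. c i p * (X i \<bullet> X i) ^ p - 2 * (c i p * (X i \<bullet> Y i) ^ p) + c i p * (Y i \<bullet> Y i) ^ p)"
    for i unfolding d_def by (simp add: fun_eq_iff algebra_simps)
  then have d_sums: "d i sums (?S X X i - 2 * ?S X Y i + ?S Y Y i)" for i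
    using sums_add[OF sums_diff[OF XX sums_mult[OF summable_sums[OF XY(1)]]] YY] by simp
  then show "summable (d i)" for i by (rule sums_summable)
  have "(\<lambda>i. ?S X X i - 2 * ?S X Y i + ?S Y Y i) sums (hx - 2 * inner_series c X Y + hy)"
    using X Y unfolding norm_series_sums_def by (intro sums_add sums_diff sums_mult XY(3)) blast+
  then show "(\<lambda>i. \<Sum>p. d i p) sums (hx - 2 * inner_series c X Y + hy)"
    by (simp add: sums_unique[OF d_sums, symmetric])
qed

lemma inner_series_distance_nonneg:
  assumes "\<And>i p. 0 \<le> c i p" "norm_series_sums c X hx" "norm_series_sums c Y hy"
  shows "0 \<le> hx - 2 * inner_series c X Y + hy"
proof -
  note d = inner_series_distance_sums[OF assms]
  have "0 \<le> (\<Sum>p. c i p * ((X i \<bullet> X i) ^ p - 2 * (X i \<bullet> Y i) ^ p + (Y i \<bullet> Y i) ^ p))" for i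
    using d(1) by (rule suminf_nonneg) (simp add: assms(1) inner_power_distance_nonneg)
  then show ?thesis by (rule sums_le[OF _ sums_zero d(2)])
qed

lemma inner_series_distance_pos:
  assumes "\<And>i p. 0 \<le> c i p" "norm_series_sums c X hx" "norm_series_sums c Y hy"
    and "0 < c i p" "1 \<le> p" "X i \<noteq> Y i" "odd p \<or> 0 \<le> X i \<bullet> Y i"
  shows "0 < hx - 2 * inner_series c X Y + hy"
proof -
  let ?d = "\<lambda>i p. c i p * ((X i \<bullet> X i) ^ p - 2 * (X i \<bullet> Y i) ^ p + (Y i \<bullet> Y i) ^ p)"
  note d = inner_series_distance_sums[OF assms(1-3)]
  have d_nonneg: "0 \<le> ?d j q" for j q
    by (simp add: assms(1) inner_power_distance_nonneg)
  have D_nonneg: "0 \<le> (\<Sum>q. ?d j q)" for j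
    using d(1) by (rule suminf_nonneg) (rule d_nonneg)
  have "0 < ?d i p"
    using assms(4) inner_power_distance_pos[OF assms(6,5,7)] by simp
  then have "0 < (\<Sum>q. ?d i q)" by (rule suminf_pos2[OF d(1) d_nonneg])
  then have "0 < (\<Sum>j. \<Sum>q. ?d j q)" by (rule suminf_pos2[OF sums_summable[OF d(2)] D_nonneg])
  then show ?thesis using sums_unique[OF d(2)] by simp
qed

section \<open>Positive-definite kernels\<close>

lemma pos_def_kernel_cmult:
  assumes "0 \<le> a" "pos_def_kernel X k"
  shows "pos_def_kernel X (\<lambda>x y. a * k x y)"
  unfolding pos_def_kernel_def
proof (intro allI impI)
  fix m :: nat and xs and b :: "nat \<Rightarrow> real" assume "\<forall>i<m. xs i \<in> X"
  then have "0 \<le> a * (\<Sum>i<m. \<Sum>j<m. b i * b j * k (xs i) (xs j))"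
    using assms(1) assms(2)[unfolded pos_def_kernel_def, rule_format, of m xs b] by simp
  then show "0 \<le> (\<Sum>i<m. \<Sum>j<m. b i * b j * (a * k (xs i) (xs j)))"
    by (simp add: sum_distrib_left mult_ac)
qed

lemma pos_def_kernel_add:
  assumes "pos_def_kernel X k" "pos_def_kernel X l"
  shows "pos_def_kernel X (\<lambda>x y. k x y + l x y)"
  using assms unfolding pos_def_kernel_def by (simp add: distrib_left sum.distrib add_nonneg_nonneg)

lemma pos_def_kernel_comp:
  assumes "pos_def_kernel Y k" "\<And>x. x \<in> X \<Longrightarrow> g x \<in> Y"
  shows "pos_def_kernel X (\<lambda>x y. k (g x) (g y))"
  unfolding pos_def_kernel_def
proof (intro allI impI)
  fix m :: nat and xs and a :: "nat \<Rightarrow> real" assume "\<forall>i<m. xs i \<in> X"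
  then show "0 \<le> (\<Sum>i<m. \<Sum>j<m. a i * a j * k (g (xs i)) (g (xs j)))"
    using assms(1)[unfolded pos_def_kernel_def, rule_format, of m "\<lambda>i. g (xs i)" a] assms(2) by simp
qed

(* Schur product theorem: expanding one factor of (x . y)^(p+1) in the basis b writes the form
   as a sum over b of forms of (x . y)^p with weights a_i (x_i . b). *)
lemma pos_def_kernel_inner_power: "pos_def_kernel UNIV (\<lambda>x y::'a::euclidean_space. (x \<bullet> y) ^ p)"
  unfolding pos_def_kernel_def
proof (induction p)
  case 0
  show ?case by (simp add: sum_product[symmetric])
next
  case (Suc p)
  show ?case
  proof (intro allI impI)
    fix m and xs :: "nat \<Rightarrow> 'a" and a :: "nat \<Rightarrow> real"
    have "(\<Sum>i<m. \<Sum>j<m. a i * a j * (xs i \<bullet> xs j) ^ Suc p)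
        = (\<Sum>b\<in>Basis. \<Sum>i<m. \<Sum>j<m. (a i * (xs i \<bullet> b)) * (a j * (xs j \<bullet> b)) * (xs i \<bullet> xs j) ^ p)"
      by (simp add: euclidean_inner[of "xs _" "xs _"] sum_distrib_left sum_distrib_right mult_ac
          sum.swap[of _ Basis])
    also have "\<dots> \<ge> 0"
    proof (rule sum_nonneg)
      fix b :: 'a
      show "0 \<le> (\<Sum>i<m. \<Sum>j<m. (a i * (xs i \<bullet> b)) * (a j * (xs j \<bullet> b)) * (xs i \<bullet> xs j) ^ p)"
        using Suc.IH[rule_format, of m xs "\<lambda>i. a i * (xs i \<bullet> b)"] by simp
    qed
    finally show "0 \<le> (\<Sum>i<m. \<Sum>j<m. a i * a j * (xs i \<bullet> xs j) ^ Suc p)" .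
  qed
qed

lemma pos_def_kernel_sums:
  assumes "\<And>n. pos_def_kernel X (k n)"
    and "\<And>x y. x \<in> X \<Longrightarrow> y \<in> X \<Longrightarrow> (\<lambda>n. k n x y) sums K x y"
  shows "pos_def_kernel X K"
  unfolding pos_def_kernel_def
proof (intro allI impI)
  fix m :: nat and xs and a :: "nat \<Rightarrow> real" assume xs: "\<forall>i<m. xs i \<in> X"
  have "(\<lambda>n. \<Sum>i<m. \<Sum>j<m. a i * a j * k n (xs i) (xs j)) sums (\<Sum>i<m. \<Sum>j<m. a i * a j * K (xs i) (xs j))"
    using xs assms(2) by (intro sums_sum sums_mult) auto
  moreover have "0 \<le> (\<Sum>i<m. \<Sum>j<m. a i * a j * k n (xs i) (xs j))" for n
    using xs assms(1)[of n] unfolding pos_def_kernel_def by blast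
  ultimately show "0 \<le> (\<Sum>i<m. \<Sum>j<m. a i * a j * K (xs i) (xs j))"
    by (rule sums_le[OF _ sums_zero, rotated])
qed

lemma pos_def_kernel_integral:
  assumes "\<And>x y. x \<in> X \<Longrightarrow> y \<in> X \<Longrightarrow> integrable M (k x y)"
    and "\<And>t. t \<in> space M \<Longrightarrow> pos_def_kernel X (\<lambda>x y. k x y t)"
  shows "pos_def_kernel X (\<lambda>x y. integral\<^sup>L M (k x y))"
  unfolding pos_def_kernel_def
proof (intro allI impI)
  fix m :: nat and xs and a :: "nat \<Rightarrow> real" assume xs: "\<forall>i<m. xs i \<in> X"
  have int: "integrable M (k (xs i) (xs j))" if "i < m" "j < m" for i j
    using xs that assms(1) by blast
  have "(\<Sum>i<m. \<Sum>j<m. a i * a j * integral\<^sup>L M (k (xs i) (xs j)))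
      = (\<Sum>i<m. \<Sum>j<m. integral\<^sup>L M (\<lambda>t. a i * a j * k (xs i) (xs j) t))"
    by simp
  also have "\<dots> = (\<Sum>i<m. integral\<^sup>L M (\<lambda>t. \<Sum>j<m. a i * a j * k (xs i) (xs j) t))"
    using int by (intro sum.cong refl Bochner_Integration.integral_sum[symmetric]) auto
  also have "\<dots> = integral\<^sup>L M (\<lambda>t. \<Sum>i<m. \<Sum>j<m. a i * a j * k (xs i) (xs j) t)"
    using int by (intro Bochner_Integration.integral_sum[symmetric] Bochner_Integration.integrable_sum
        integrable_mult_right) auto
  also have "\<dots> \<ge> 0"
    using xs assms(2) unfolding pos_def_kernel_def by (intro Bochner_Integration.integral_nonneg) blast
  finally show "0 \<le> (\<Sum>i<m. \<Sum>j<m. a i * a j * integral\<^sup>L M (k (xs i) (xs j)))" .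
qed

lemma pos_def_kernel_inner_series:
  fixes F :: "'b \<Rightarrow> nat \<Rightarrow> 'a::euclidean_space"
  assumes c: "\<And>i p. 0 \<le> c i p" and F: "\<And>x. x \<in> X \<Longrightarrow> norm_series_sums c (F x) (h x)"
  shows "pos_def_kernel X (\<lambda>x y. inner_series c (F x) (F y))"
proof (rule pos_def_kernel_sums[where k="\<lambda>i x y. \<Sum>p. c i p * (F x i \<bullet> F y i) ^ p"])
  fix i
  show "pos_def_kernel X (\<lambda>x y. \<Sum>p. c i p * (F x i \<bullet> F y i) ^ p)"
  proof (rule pos_def_kernel_sums[where k="\<lambda>p x y. c i p * (F x i \<bullet> F y i) ^ p"])
    show "pos_def_kernel X (\<lambda>x y. c i p * (F x i \<bullet> F y i) ^ p)" for p
      by (intro pos_def_kernel_cmult c pos_def_kernel_comp[OF pos_def_kernel_inner_power]) simp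
    show "(\<lambda>p. c i p * (F x i \<bullet> F y i) ^ p) sums (\<Sum>p. c i p * (F x i \<bullet> F y i) ^ p)"
      if "x \<in> X" "y \<in> X" for x y
      using summable_inner_series(1)[OF c F[OF that(1)] F[OF that(2)]] by (rule summable_sums)
  qed
next
  show "(\<lambda>i. \<Sum>p. c i p * (F x i \<bullet> F y i) ^ p) sums inner_series c (F x) (F y)"
    if "x \<in> X" "y \<in> X" for x y
    using summable_inner_series(3)[OF c F[OF that(1)] F[OF that(2)]] .
qed

section \<open>The energy kernel on states\<close>

lemma kterm_eq_inner: "kterm c f C1 C2 i p = c i p * (matfun (f i) C1 \<bullet> matfun (f i) C2) ^ p"
  unfolding kterm_def trace_matfun_mult ..

lemma ktilde_eq_inner_series:
  "ktilde c f C1 C2 = inner_series c (\<lambda>i. matfun (f i) C1) (\<lambda>i. matfun (f i) C2)"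
  unfolding ktilde_def inner_series_def kterm_eq_inner ..

lemma borel_measurable_inner_series:
  fixes F G :: "nat \<Rightarrow> 'a \<Rightarrow> 'b::euclidean_space"
  assumes "\<And>i. F i \<in> borel_measurable M" "\<And>i. G i \<in> borel_measurable M"
    and "\<And>x i. x \<in> space M \<Longrightarrow> summable (\<lambda>p. c i p * (F i x \<bullet> G i x) ^ p)"
    and "\<And>x. x \<in> space M \<Longrightarrow> summable (\<lambda>i. \<Sum>p. c i p * (F i x \<bullet> G i x) ^ p)"
  shows "(\<lambda>x. inner_series c (\<lambda>i. F i x) (\<lambda>i. G i x)) \<in> borel_measurable M"
  unfolding inner_series_def
proof (rule borel_measurable_LIMSEQ_metric)
  have "(\<lambda>x. \<Sum>p. c i p * (F i x \<bullet> G i x) ^ p) \<in> borel_measurable M" for i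
  proof (rule borel_measurable_LIMSEQ_metric)
    show "(\<lambda>x. \<Sum>p<n. c i p * (F i x \<bullet> G i x) ^ p) \<in> borel_measurable M" for n
      using assms(1,2) by measurable
    show "(\<lambda>n. \<Sum>p<n. c i p * (F i x \<bullet> G i x) ^ p) \<longlonglongrightarrow> (\<Sum>p. c i p * (F i x \<bullet> G i x) ^ p)"
      if "x \<in> space M" for x
      using assms(3)[OF that] by (rule summable_LIMSEQ)
  qed
  then show "(\<lambda>x. \<Sum>i<n. \<Sum>p. c i p * (F i x \<bullet> G i x) ^ p) \<in> borel_measurable M" for n
    by (intro borel_measurable_sum) auto
  show "(\<lambda>n. \<Sum>i<n. \<Sum>p. c i p * (F i x \<bullet> G i x) ^ p) \<longlonglongrightarrow> (\<Sum>i. \<Sum>p. c i p * (F i x \<bullet> G i x) ^ p)"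
    if "x \<in> space M" for x
    using assms(4)[OF that] by (rule summable_LIMSEQ)
qed

locale energy_kernel =
  fixes \<Omega> :: "(real^'n) set" and D :: "(real^'n^'n) set" and \<theta> :: real
    and c :: "nat \<Rightarrow> nat \<Rightarrow> real" and f :: "nat \<Rightarrow> real \<Rightarrow> real" and h :: "real^'n^'n \<Rightarrow> real"
  assumes \<theta>_pos: "0 < \<theta>"
    and D_sym: "\<And>C. C \<in> D \<Longrightarrow> sym_mat C"
    and f_measurable: "\<And>i. f i \<in> borel_measurable (restrict_space borel (spec_set D))"
    and c_nonneg: "\<And>i p. 0 \<le> c i p"
    and h_sums: "\<And>C. C \<in> D \<Longrightarrow> norm_series_sums c (\<lambda>i. matfun (f i) C) (h C)"
begin

abbreviation states :: "'n state set" where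
  "states \<equiv> finite_states \<Omega> D \<theta> h"

lemma statesD:
  assumes "q \<in> states"
  shows "fst q \<in> borel_measurable (lebesgue_on \<Omega>)" "snd q \<in> borel_measurable (lebesgue_on \<Omega>)"
    and "x \<in> \<Omega> \<Longrightarrow> snd q x \<in> D"
    and "integrable (lebesgue_on \<Omega>) (\<lambda>x. (norm (fst q x))\<^sup>2 + \<theta> * h (snd q x))"
  using assms unfolding finite_states_def by auto

lemma summable_kterm_abs:
  assumes "C1 \<in> D" "C2 \<in> D"
  shows "summable (\<lambda>p. \<bar>kterm c f C1 C2 i p\<bar>)" and "summable (\<lambda>i. \<Sum>p. \<bar>kterm c f C1 C2 i p\<bar>)"
  unfolding kterm_eq_inner
  using summable_inner_series_abs(1,2)[OF c_nonneg h_sums[OF assms(1)] h_sums[OF assms(2)]] by auto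

lemma ktilde_diag: "C \<in> D \<Longrightarrow> ktilde c f C C = h C"
  unfolding ktilde_eq_inner_series using h_sums by (rule inner_series_diag)

lemma h_nonneg: "C \<in> D \<Longrightarrow> 0 \<le> h C"
  using c_nonneg h_sums by (rule norm_series_sums_nonneg)

lemma abs_ktilde_le: "C1 \<in> D \<Longrightarrow> C2 \<in> D \<Longrightarrow> \<bar>ktilde c f C1 C2\<bar> \<le> (h C1 + h C2) / 2"
  unfolding ktilde_eq_inner_series by (rule abs_inner_series_le[OF c_nonneg h_sums h_sums])

lemma pos_def_kernel_ktilde: "pos_def_kernel D (ktilde c f)"
  unfolding ktilde_eq_inner_series[abs_def] using c_nonneg h_sums by (rule pos_def_kernel_inner_series)

lemma ktilde_distance_nonneg:
  "C1 \<in> D \<Longrightarrow> C2 \<in> D \<Longrightarrow> 0 \<le> h C1 - 2 * ktilde c f C1 C2 + h C2"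
  unfolding ktilde_eq_inner_series by (rule inner_series_distance_nonneg[OF c_nonneg h_sums h_sums])

lemma ktilde_distance_pos:
  assumes "0 < c i p" "1 \<le> p" and inj: "inj_on (f i) (spec_set D)"
    and sign: "odd p \<or> (\<forall>t\<in>spec_set D. 0 \<le> f i t)"
    and C: "C1 \<in> D" "C2 \<in> D" "C1 \<noteq> C2"
  shows "0 < h C1 - 2 * ktilde c f C1 C2 + h C2"
  unfolding ktilde_eq_inner_series
proof (rule inner_series_distance_pos[OF c_nonneg h_sums h_sums assms(1,2)])
  have spectra: "mat_spectrum C1 \<union> mat_spectrum C2 \<subseteq> spec_set D"
    using C unfolding spec_set_def by blast
  show "matfun (f i) C1 \<noteq> matfun (f i) C2"
    using matfun_inj[OF D_sym D_sym inj_on_subset[OF inj spectra]] C by blast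
  show "odd p \<or> 0 \<le> matfun (f i) C1 \<bullet> matfun (f i) C2"
    using sign inner_matfun_nonneg spectra by blast
qed (use C in auto)

lemma borel_measurable_matfun_state:
  assumes "q \<in> states"
  shows "(\<lambda>x. matfun (f i) (snd q x)) \<in> borel_measurable (lebesgue_on \<Omega>)"
proof -
  interpret sym_matrix_field "lebesgue_on \<Omega>" "snd q" "spec_set D"
    using statesD[OF assms] D_sym unfolding spec_set_def by unfold_locales auto
  show ?thesis using f_measurable by (rule borel_measurable_matfun)
qed

lemma borel_measurable_ktilde_states:
  assumes q1: "q1 \<in> states" and q2: "q2 \<in> states"
  shows "(\<lambda>x. ktilde c f (snd q1 x) (snd q2 x)) \<in> borel_measurable (lebesgue_on \<Omega>)"
  unfolding ktilde_eq_inner_series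
proof (rule borel_measurable_inner_series)
  show "(\<lambda>x. matfun (f i) (snd q1 x)) \<in> borel_measurable (lebesgue_on \<Omega>)"
    and "(\<lambda>x. matfun (f i) (snd q2 x)) \<in> borel_measurable (lebesgue_on \<Omega>)" for i
    by (rule borel_measurable_matfun_state[OF q1], rule borel_measurable_matfun_state[OF q2])
  fix x assume "x \<in> space (lebesgue_on \<Omega>)"
  then have "snd q1 x \<in> D" "snd q2 x \<in> D" using statesD(3) q1 q2 by auto
  note summable = summable_inner_series[OF c_nonneg h_sums[OF this(1)] h_sums[OF this(2)]]
  show "summable (\<lambda>p. c i p * (matfun (f i) (snd q1 x) \<bullet> matfun (f i) (snd q2 x)) ^ p)" for i
    by (rule summable(1))
  show "summable (\<lambda>i. \<Sum>p. c i p * (matfun (f i) (snd q1 x) \<bullet> matfun (f i) (snd q2 x)) ^ p)"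
    by (rule summable_rabs_cancel[OF summable(2)])
qed

lemma integrable_kintegrand:
  assumes q1: "q1 \<in> states" and q2: "q2 \<in> states"
  shows "integrable (lebesgue_on \<Omega>) (kintegrand \<theta> (ktilde c f) q1 q2)"
proof (rule Bochner_Integration.integrable_bound)
  let ?E = "\<lambda>q x. (norm (fst q x))\<^sup>2 + \<theta> * h (snd q x)"
  show "integrable (lebesgue_on \<Omega>) (\<lambda>x. (?E q1 x + ?E q2 x) / 2)"
    using statesD(4)[OF q1] statesD(4)[OF q2] by simp
  show "kintegrand \<theta> (ktilde c f) q1 q2 \<in> borel_measurable (lebesgue_on \<Omega>)"
    unfolding kintegrand_def[abs_def]
    using statesD(1)[OF q1] statesD(1)[OF q2] borel_measurable_ktilde_states[OF q1 q2] by measurable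
  show "AE x in lebesgue_on \<Omega>. norm (kintegrand \<theta> (ktilde c f) q1 q2 x) \<le> norm ((?E q1 x + ?E q2 x) / 2)"
  proof (rule AE_I2)
    fix x assume "x \<in> space (lebesgue_on \<Omega>)"
    then have D1: "snd q1 x \<in> D" and D2: "snd q2 x \<in> D" using statesD(3) q1 q2 by auto
    have "norm (kintegrand \<theta> (ktilde c f) q1 q2 x)
        \<le> \<bar>fst q1 x \<bullet> fst q2 x\<bar> + \<theta> * \<bar>ktilde c f (snd q1 x) (snd q2 x)\<bar>"
      unfolding kintegrand_def real_norm_def
      using abs_triangle_ineq[of "fst q1 x \<bullet> fst q2 x" "\<theta> * ktilde c f (snd q1 x) (snd q2 x)"] \<theta>_pos
      by (simp add: abs_mult)
    also have "\<dots> \<le> ((norm (fst q1 x))\<^sup>2 + (norm (fst q2 x))\<^sup>2) / 2 + \<theta> * ((h (snd q1 x) + h (snd q2 x)) / 2)"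
      using two_abs_inner_power_le[of "fst q1 x" "fst q2 x" 1] abs_ktilde_le[OF D1 D2] \<theta>_pos
      by (intro add_mono mult_left_mono) (simp_all add: power2_norm_eq_inner)
    also have "\<dots> = norm ((?E q1 x + ?E q2 x) / 2)"
      using h_nonneg[OF D1] h_nonneg[OF D2] \<theta>_pos by (simp add: field_simps)
    finally show "norm (kintegrand \<theta> (ktilde c f) q1 q2 x) \<le> norm ((?E q1 x + ?E q2 x) / 2)" .
  qed
qed

lemma pos_def_kernel_kintegrand:
  assumes "x \<in> \<Omega>"
  shows "pos_def_kernel states (\<lambda>q1 q2. kintegrand \<theta> (ktilde c f) q1 q2 x)"
proof -
  have "pos_def_kernel states (\<lambda>q1 q2. (fst q1 x \<bullet> fst q2 x) ^ 1)"
    by (rule pos_def_kernel_comp[OF pos_def_kernel_inner_power]) simp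
  moreover have "pos_def_kernel states (\<lambda>q1 q2. \<theta> * ktilde c f (snd q1 x) (snd q2 x))"
    using \<theta>_pos statesD(3)[OF _ assms]
    by (intro pos_def_kernel_cmult pos_def_kernel_comp[OF pos_def_kernel_ktilde]) auto
  ultimately have "pos_def_kernel states
      (\<lambda>q1 q2. (fst q1 x \<bullet> fst q2 x) ^ 1 + \<theta> * ktilde c f (snd q1 x) (snd q2 x))"
    by (rule pos_def_kernel_add)
  then show ?thesis by (simp add: kintegrand_def)
qed

lemma pos_def_kernel_states: "pos_def_kernel states (kernel \<Omega> \<theta> (ktilde c f))"
proof -
  have "pos_def_kernel states (\<lambda>q1 q2. integral\<^sup>L (lebesgue_on \<Omega>) (kintegrand \<theta> (ktilde c f) q1 q2))"
    using integrable_kintegrand pos_def_kernel_kintegrand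
    by (rule pos_def_kernel_integral) auto
  then show ?thesis
    unfolding kernel_def[abs_def] by (rule pos_def_kernel_cmult[rotated]) simp
qed

lemma energy_eq_kernel:
  assumes "q \<in> states"
  shows "energy \<Omega> \<theta> h q = kernel \<Omega> \<theta> (ktilde c f) q q"
  unfolding energy_def kernel_def
proof (intro arg_cong[where f="\<lambda>t. 1/2 * t"] Bochner_Integration.integral_cong refl)
  fix x assume "x \<in> space (lebesgue_on \<Omega>)"
  then have "snd q x \<in> D" using statesD(3)[OF assms] by simp
  then show "(norm (fst q x))\<^sup>2 + \<theta> * h (snd q x) = kintegrand \<theta> (ktilde c f) q q x"
    unfolding kintegrand_def by (simp add: ktilde_diag power2_norm_eq_inner)
qed

lemma kintegrand_distance:
  assumes "x \<in> \<Omega>" "q1 \<in> states" "q2 \<in> states"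
  shows "kintegrand \<theta> (ktilde c f) q1 q1 x - 2 * kintegrand \<theta> (ktilde c f) q1 q2 x
      + kintegrand \<theta> (ktilde c f) q2 q2 x
    = (norm (fst q1 x - fst q2 x))\<^sup>2
      + \<theta> * (h (snd q1 x) - 2 * ktilde c f (snd q1 x) (snd q2 x) + h (snd q2 x))"
  using statesD(3)[OF assms(2,1)] statesD(3)[OF assms(3,1)]
  by (simp add: kintegrand_def ktilde_diag power2_norm_eq_inner inner_diff_left inner_diff_right
      inner_commute algebra_simps)

lemma kintegrand_distance_nonneg:
  assumes "x \<in> \<Omega>" "q1 \<in> states" "q2 \<in> states"
  shows "0 \<le> kintegrand \<theta> (ktilde c f) q1 q1 x - 2 * kintegrand \<theta> (ktilde c f) q1 q2 x
      + kintegrand \<theta> (ktilde c f) q2 q2 x"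
  unfolding kintegrand_distance[OF assms]
  using ktilde_distance_nonneg[OF statesD(3)[OF assms(2,1)] statesD(3)[OF assms(3,1)]] \<theta>_pos
  by simp

lemma kintegrand_distance_pos:
  assumes "0 < c i p" "1 \<le> p" "inj_on (f i) (spec_set D)" "odd p \<or> (\<forall>t\<in>spec_set D. 0 \<le> f i t)"
    and "x \<in> \<Omega>" "q1 \<in> states" "q2 \<in> states"
    and "fst q1 x \<noteq> fst q2 x \<or> snd q1 x \<noteq> snd q2 x"
  shows "0 < kintegrand \<theta> (ktilde c f) q1 q1 x - 2 * kintegrand \<theta> (ktilde c f) q1 q2 x
      + kintegrand \<theta> (ktilde c f) q2 q2 x"
proof -
  have D: "snd q1 x \<in> D" "snd q2 x \<in> D" using statesD(3) assms(5-7) by auto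
  show ?thesis
  proof (cases "snd q1 x = snd q2 x")
    case True
    then have "fst q1 x \<noteq> fst q2 x" using assms(8) by blast
    then show ?thesis
      unfolding kintegrand_distance[OF assms(5-7)] using True ktilde_diag[OF D(2)] by simp
  next
    case False
    then show ?thesis
      unfolding kintegrand_distance[OF assms(5-7)]
      using ktilde_distance_pos[OF assms(1-4) D False] \<theta>_pos by (simp add: add_nonneg_pos)
  qed
qed

lemma kernel_distance_pos:
  assumes "0 < c i p" "1 \<le> p" "inj_on (f i) (spec_set D)" "odd p \<or> (\<forall>t\<in>spec_set D. 0 \<le> f i t)"
    and q1: "q1 \<in> states" and q2: "q2 \<in> states" and "\<not> state_ae_eq \<Omega> q1 q2"
  shows "0 < kernel \<Omega> \<theta> (ktilde c f) q1 q1 - 2 * kernel \<Omega> \<theta> (ktilde c f) q1 q2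
      + kernel \<Omega> \<theta> (ktilde c f) q2 q2"
proof -
  let ?k = "kintegrand \<theta> (ktilde c f)"
  define G where "G x = ?k q1 q1 x - 2 * ?k q1 q2 x + ?k q2 q2 x" for x
  have G_int: "integrable (lebesgue_on \<Omega>) G"
    unfolding G_def using integrable_kintegrand q1 q2 by auto
  have G_nonneg: "AE x in lebesgue_on \<Omega>. 0 \<le> G x"
    unfolding G_def using kintegrand_distance_nonneg q1 q2 by (intro AE_I2) simp
  have "integral\<^sup>L (lebesgue_on \<Omega>) G \<noteq> 0"
  proof
    assume "integral\<^sup>L (lebesgue_on \<Omega>) G = 0"
    then have "AE x in lebesgue_on \<Omega>. G x = 0"
      using integral_nonneg_eq_0_iff_AE[OF G_int G_nonneg] by simp
    then have "AE x in lebesgue_on \<Omega>. fst q1 x = fst q2 x \<and> snd q1 x = snd q2 x"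
      unfolding G_def using kintegrand_distance_pos[OF assms(1-4) _ q1 q2]
      by (elim AE_mp) (intro AE_I2, force)
    then show False using assms(7) unfolding state_ae_eq_def by blast
  qed
  moreover have "0 \<le> integral\<^sup>L (lebesgue_on \<Omega>) G"
    using G_nonneg by (rule integral_nonneg_AE)
  moreover have "kernel \<Omega> \<theta> (ktilde c f) q1 q1 - 2 * kernel \<Omega> \<theta> (ktilde c f) q1 q2
      + kernel \<Omega> \<theta> (ktilde c f) q2 q2 = 1/2 * integral\<^sup>L (lebesgue_on \<Omega>) G"
    unfolding G_def kernel_def using integrable_kintegrand q1 q2 by simp
  ultimately show ?thesis by simp
qed

end

theorem theorem1:
  fixes \<Omega> :: "(real^'n) set"
    and \<beta> Re Wi \<theta> c0 :: real
    and s :: "real^'n^'n \<Rightarrow> real^'n^'n"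
    and D :: "(real^'n^'n) set"
    and f :: "nat \<Rightarrow> real \<Rightarrow> real"
    and c :: "nat \<Rightarrow> nat \<Rightarrow> real"
  assumes \<Omega>_meas: "\<Omega> \<in> sets lebesgue"
    and \<beta>: "0 < \<beta>" "\<beta> < 1"
    and Re: "0 < Re" and Wi: "0 < Wi"
    and \<theta>_def: "\<theta> = (1 - \<beta>) / (Re * Wi)"
    and D_psd: "\<forall>C\<in>D. psd_mat C"
    and s_sym: "\<forall>C\<in>D. sym_mat (s C)"
    and c0: "0 \<le> c0"
    and f_meas: "\<forall>i. f i \<in> borel_measurable (restrict_space borel (spec_set D))"
    and c_nonneg: "\<forall>i p. 0 \<le> c i p"
    and h_series: "\<forall>C\<in>D.
          (\<forall>i. summable (\<lambda>p. c i p * (trace (matfun (f i) C ** matfun (f i) C)) ^ p)) \<and>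
          (\<lambda>i. \<Sum>p. c i p * (trace (matfun (f i) C ** matfun (f i) C)) ^ p)
             sums (hfun Wi c0 s C)"
  shows "(\<forall>C1\<in>D. \<forall>C2\<in>D.
            (\<forall>i. summable (\<lambda>p. \<bar>kterm c f C1 C2 i p\<bar>)) \<and>
            summable (\<lambda>i. \<Sum>p. \<bar>kterm c f C1 C2 i p\<bar>))
    \<and> (\<forall>q1\<in>finite_states \<Omega> D \<theta> (hfun Wi c0 s). \<forall>q2\<in>finite_states \<Omega> D \<theta> (hfun Wi c0 s).
            integrable (lebesgue_on \<Omega>) (kintegrand \<theta> (ktilde c f) q1 q2))
    \<and> pos_def_kernel (finite_states \<Omega> D \<theta> (hfun Wi c0 s)) (kernel \<Omega> \<theta> (ktilde c f))
    \<and> (\<forall>q\<in>finite_states \<Omega> D \<theta> (hfun Wi c0 s).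
            energy \<Omega> \<theta> (hfun Wi c0 s) q = kernel \<Omega> \<theta> (ktilde c f) q q)
    \<and> ((\<exists>i p. 0 < c i p \<and> 1 \<le> p \<and> inj_on (f i) (spec_set D) \<and>
              (odd p \<or> (\<forall>x\<in>spec_set D. 0 \<le> f i x))) \<longrightarrow>
        (\<forall>q1\<in>finite_states \<Omega> D \<theta> (hfun Wi c0 s). \<forall>q2\<in>finite_states \<Omega> D \<theta> (hfun Wi c0 s).
            \<not> state_ae_eq \<Omega> q1 q2 \<longrightarrow>
            0 < kernel \<Omega> \<theta> (ktilde c f) q1 q1 - 2 * kernel \<Omega> \<theta> (ktilde c f) q1 q2
                + kernel \<Omega> \<theta> (ktilde c f) q2 q2))"
proof -
  \<comment> \<open>h >= 0 already follows from the series\<close>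
  interpret energy_kernel \<Omega> D \<theta> c f "hfun Wi c0 s"
  proof
    show "0 < \<theta>" unfolding \<theta>_def using \<beta> Re Wi by simp
    show "sym_mat C" if "C \<in> D" for C using D_psd that unfolding psd_mat_def by blast
    show "norm_series_sums c (\<lambda>i. matfun (f i) C) (hfun Wi c0 s C)" if "C \<in> D" for C
      using h_series that unfolding norm_series_sums_def trace_matfun_mult by blast
  qed (use f_meas c_nonneg in auto)
  show ?thesis
    using summable_kterm_abs integrable_kintegrand pos_def_kernel_states energy_eq_kernel
      kernel_distance_pos by (intro conjI ballI impI; blast)
qed

end
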